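(* Let $0\le\alpha\le1$, let $a\in C(\mathbf{R})$ satisfy $\frac{a_1}{(1+|x|)^{\alpha}}\le a(x)\le \frac{a_2}{(1+|x|)^{\alpha}}$ ($a_1,a_2>0$), and let $V\in C^1(\mathbf{R})$ be bounded with $V>0$ and $xV'(x)\le0$. Let $R>0$, $[u_0,u_1]\in H^1(\mathbf{R})\times L^2(\mathbf{R})$ with supports in $\{|x|\le R\}$, and let $u\in C([0,\infty);H^1(\mathbf{R}))\cap C^1([0,\infty);L^2(\mathbf{R}))$ be the weak solution of $u_{tt}-u_{xx}+V(x)u+a(x)u_t=0$, $u(0)=u_0$, $u_t(0)=u_1$. Let $\varepsilon_1,\varepsilon_3>0$, $f(t)=\varepsilon_1(1+t)^2$ and $h(t,x)=\varepsilon_3(1+t)x\phi(x)$, where $\phi(x)=1$ for $|x|\le1$ and $\phi(x)=1/|x|$ for $|x|\ge1$. Then there exists $t_0$ such that for all $t\ge t_0$, $$f(t)E(t)+\int_{\mathbf{R}}h(t,x)u_x(t,x)u_t(t,x)\,dx\ \ge\ \frac12 f(t)E(t).$$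
   Context: The total energy is $E(t)=\frac12\big(\|u_t(t,\cdot)\|^2+\|u_x(t,\cdot)\|^2+\|\sqrt{V}\,u(t,\cdot)\|^2\big)$, with $\|\cdot\|$ the $L^2(\mathbf{R})$ norm. *)

theory Defs
  imports "HOL-Analysis.Analysis"
begin

definition L2 :: "(real \<Rightarrow> real) \<Rightarrow> bool" where
  "L2 f \<longleftrightarrow> f \<in> borel_measurable lborel \<and> integrable lborel (\<lambda>x. (f x)^2)"

definition L2sq :: "(real \<Rightarrow> real) \<Rightarrow> real" where
  "L2sq f = (LINT x|lborel. (f x)^2)"

text \<open>Test functions: C^1 with compact support (phi' is the derivative of phi).
  Weak derivatives / weak equations tested against these are equivalent to testing
  against C_c^infinity functions.\<close>
definition test_fun :: "(real \<Rightarrow> real) \<Rightarrow> (real \<Rightarrow> real) \<Rightarrow> bool" where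
  "test_fun \<phi> \<phi>' \<longleftrightarrow> (\<forall>x. (\<phi> has_real_derivative \<phi>' x) (at x)) \<and> continuous_on UNIV \<phi>'
     \<and> (\<exists>B. \<forall>x. B < \<bar>x\<bar> \<longrightarrow> \<phi> x = 0)"

definition weak_deriv :: "(real \<Rightarrow> real) \<Rightarrow> (real \<Rightarrow> real) \<Rightarrow> bool" where
  "weak_deriv f g \<longleftrightarrow> (\<forall>\<phi> \<phi>'. test_fun \<phi> \<phi>' \<longrightarrow>
      (LINT x|lborel. f x * \<phi>' x) = - (LINT x|lborel. g x * \<phi> x))"

definition H1 :: "(real \<Rightarrow> real) \<Rightarrow> bool" where
  "H1 f \<longleftrightarrow> L2 f \<and> (\<exists>g. L2 g \<and> weak_deriv f g)"

text \<open>Weak solution of u_tt - u_xx + V u + a u_t = 0, u(0)=u0, u_t(0)=u1, with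
  u in C([0,inf);H^1) and C^1([0,inf);L^2).  Here u t, ux t, ut t are the functions
  u(t,.), u_x(t,.), u_t(t,.).\<close>
definition weak_solution ::
  "(real \<Rightarrow> real) \<Rightarrow> (real \<Rightarrow> real) \<Rightarrow> (real \<Rightarrow> real) \<Rightarrow> (real \<Rightarrow> real)
   \<Rightarrow> (real \<Rightarrow> real \<Rightarrow> real) \<Rightarrow> (real \<Rightarrow> real \<Rightarrow> real) \<Rightarrow> (real \<Rightarrow> real \<Rightarrow> real) \<Rightarrow> bool" where
  "weak_solution a V u0 u1 u ux ut \<longleftrightarrow>
     (\<forall>t\<ge>0. L2 (u t) \<and> L2 (ux t) \<and> L2 (ut t) \<and> weak_deriv (u t) (ux t))
   \<and> (\<forall>t\<ge>0. ((\<lambda>s. L2sq (\<lambda>x. u s x - u t x) + L2sq (\<lambda>x. ux s x - ux t x)) \<longlongrightarrow> 0)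
                (at t within {0..}))
   \<and> (\<forall>t\<ge>0. ((\<lambda>s. L2sq (\<lambda>x. (u s x - u t x) / (s - t) - ut t x)) \<longlongrightarrow> 0)
                (at t within {0..}))
   \<and> (\<forall>t\<ge>0. ((\<lambda>s. L2sq (\<lambda>x. ut s x - ut t x)) \<longlongrightarrow> 0) (at t within {0..}))
   \<and> (\<forall>\<phi> \<phi>'. test_fun \<phi> \<phi>' \<longrightarrow> (\<forall>t>0.
        ((\<lambda>s. LINT x|lborel. ut s x * \<phi> x) has_real_derivative
          - (LINT x|lborel. ux t x * \<phi>' x + V x * u t x * \<phi> x + a x * ut t x * \<phi> x)) (at t)))
   \<and> (AE x in lborel. u 0 x = u0 x) \<and> (AE x in lborel. ut 0 x = u1 x)"

definition energy :: "(real \<Rightarrow> real) \<Rightarrow> (real \<Rightarrow> real \<Rightarrow> real) \<Rightarrow> (real \<Rightarrow> real \<Rightarrow> real)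
   \<Rightarrow> (real \<Rightarrow> real \<Rightarrow> real) \<Rightarrow> real \<Rightarrow> real" where
  "energy V u ux ut t = (L2sq (ut t) + L2sq (ux t) + L2sq (\<lambda>x. sqrt (V x) * u t x)) / 2"

definition cutoff :: "real \<Rightarrow> real" where
  "cutoff x = (if \<bar>x\<bar> \<le> 1 then 1 else 1 / \<bar>x\<bar>)"

end

theory Submission
  imports Defs
begin

text \<open>Since \<open>\<bar>x \<phi>(x)\<bar> \<le> 1\<close>, the weight satisfies \<open>\<bar>h(t,x)\<bar> \<le> \<epsilon>\<^sub>3(1+t)\<close>, so by
  \<open>\<bar>u\<^sub>x u\<^sub>t\<bar> \<le> (u\<^sub>x\<^sup>2 + u\<^sub>t\<^sup>2)/2\<close> the cross term is at least \<open>-\<epsilon>\<^sub>3(1+t) E(t)\<close>.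
  This is absorbed by \<open>f(t)E(t)/2 = \<epsilon>\<^sub>1(1+t)\<^sup>2 E(t)/2\<close> as soon as \<open>\<epsilon>\<^sub>1(1+t) \<ge> 2\<epsilon>\<^sub>3\<close>.\<close>

lemma abs_mult_cutoff_le_1: "\<bar>x * cutoff x\<bar> \<le> 1"
  unfolding cutoff_def by (auto simp: abs_mult)

lemma abs_mult_le_half_sum_squares: "\<bar>a * b\<bar> \<le> (a\<^sup>2 + b\<^sup>2) / (2::real)"
  using sum_squares_bound[of "\<bar>a\<bar>" "\<bar>b\<bar>"] by (simp add: abs_mult)

lemma L2sq_nonneg: "0 \<le> L2sq f"
  unfolding L2sq_def by simp

lemma abs_integral_weighted_product_le:
  assumes "L2 g" "L2 k" "\<And>x. \<bar>w x\<bar> \<le> c"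
  shows "\<bar>LINT x|lborel. w x * g x * k x\<bar> \<le> c * ((L2sq g + L2sq k) / 2)"
proof -
  have c: "0 \<le> c" using assms(3)[of 0] by simp
  have pointwise: "\<bar>w x * g x * k x\<bar> \<le> c * (((g x)\<^sup>2 + (k x)\<^sup>2) / 2)" for x
  proof -
    have "\<bar>w x * g x * k x\<bar> = \<bar>w x\<bar> * \<bar>g x * k x\<bar>" by (simp add: abs_mult)
    also have "\<dots> \<le> c * (((g x)\<^sup>2 + (k x)\<^sup>2) / 2)"
      using assms(3) abs_mult_le_half_sum_squares c by (intro mult_mono) auto
    finally show ?thesis .
  qed
  have integrable: "integrable lborel (\<lambda>x. c * (((g x)\<^sup>2 + (k x)\<^sup>2) / 2))"
    using assms(1,2) unfolding L2_def by auto
  have "\<bar>LINT x|lborel. w x * g x * k x\<bar> \<le> (LINT x|lborel. \<bar>w x * g x * k x\<bar>)"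
    by (rule integral_abs_bound)
  also have "\<dots> \<le> (LINT x|lborel. c * (((g x)\<^sup>2 + (k x)\<^sup>2) / 2))"
    using integrable pointwise c by (intro integral_mono') auto
  also have "\<dots> = c * ((L2sq g + L2sq k) / 2)"
    using assms(1,2) unfolding L2_def L2sq_def by (simp add: integral_add)
  finally show ?thesis .
qed

lemma energy_ge_half_kinetic: "(L2sq (ux t) + L2sq (ut t)) / 2 \<le> energy V u ux ut t"
  unfolding energy_def using L2sq_nonneg[of "\<lambda>x. sqrt (V x) * u t x"] by simp

theorem lemma2p5:
  fixes \<alpha> a1 a2 R \<epsilon>1 \<epsilon>3 :: real
    and a V u0 u1 :: "real \<Rightarrow> real"
    and u ux ut :: "real \<Rightarrow> real \<Rightarrow> real"
    and f :: "real \<Rightarrow> real" and h :: "real \<Rightarrow> real \<Rightarrow> real"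
  assumes "0 \<le> \<alpha>" "\<alpha> \<le> 1"
    and "a1 > 0" "a2 > 0"
    and "continuous_on UNIV a"
    and "\<And>x. a1 / (1 + \<bar>x\<bar>) powr \<alpha> \<le> a x" "\<And>x. a x \<le> a2 / (1 + \<bar>x\<bar>) powr \<alpha>"
    and "V differentiable_on UNIV" "continuous_on UNIV (deriv V)"
    and "bounded (range V)" "\<And>x. V x > 0" "\<And>x. x * deriv V x \<le> 0"
    and "R > 0"
    and "H1 u0" "L2 u1"
    and "\<And>x. R < \<bar>x\<bar> \<Longrightarrow> u0 x = 0" "\<And>x. R < \<bar>x\<bar> \<Longrightarrow> u1 x = 0"
    and "weak_solution a V u0 u1 u ux ut"
    and "\<epsilon>1 > 0" "\<epsilon>3 > 0"
    and "\<And>t. f t = \<epsilon>1 * (1 + t)^2"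
    and "\<And>t x. h t x = \<epsilon>3 * (1 + t) * x * cutoff x"
  shows "\<exists>t0\<ge>0. \<forall>t\<ge>t0.
           f t * energy V u ux ut t + (LINT x|lborel. h t x * ux t x * ut t x)
             \<ge> 1/2 * f t * energy V u ux ut t"
proof (intro exI[of _ "max 0 (2 * \<epsilon>3 / \<epsilon>1)"] conjI allI impI)
  fix t assume "max 0 (2 * \<epsilon>3 / \<epsilon>1) \<le> t"
  then have t: "0 \<le> t" "2 * \<epsilon>3 \<le> \<epsilon>1 * t" using assms(19) by (auto simp: field_simps)
  define c where "c = \<epsilon>3 * (1 + t)"
  define E where "E = energy V u ux ut t"
  have c: "0 \<le> c" using assms(20) t(1) by (simp add: c_def)
  have L2: "L2 (ux t)" "L2 (ut t)" using assms(18) t(1) unfolding weak_solution_def by auto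
  have weight: "\<bar>h t x\<bar> \<le> c" for x
  proof -
    have "\<bar>h t x\<bar> = c * \<bar>x * cutoff x\<bar>"
      using assms(20) t(1) by (simp add: assms(22) c_def abs_mult mult.assoc)
    then show ?thesis using abs_mult_cutoff_le_1[of x] c by (simp add: mult_left_le)
  qed
  have kinetic: "(L2sq (ux t) + L2sq (ut t)) / 2 \<le> E"
    unfolding E_def by (rule energy_ge_half_kinetic)
  have "\<bar>LINT x|lborel. h t x * ux t x * ut t x\<bar> \<le> c * ((L2sq (ux t) + L2sq (ut t)) / 2)"
    by (rule abs_integral_weighted_product_le[OF L2 weight])
  also have "\<dots> \<le> c * E" by (rule mult_left_mono[OF kinetic c])
  also have "\<dots> \<le> 1/2 * f t * E"
  proof (rule mult_right_mono)
    have "\<epsilon>3 \<le> 1/2 * (\<epsilon>1 * (1 + t))" using t assms(19) by (simp add: distrib_left)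
    then have "\<epsilon>3 * (1 + t) \<le> 1/2 * (\<epsilon>1 * (1 + t)) * (1 + t)"
      using t(1) by (intro mult_right_mono) auto
    then show "c \<le> 1/2 * f t" by (simp add: c_def assms(21) power2_eq_square mult.assoc)
    show "0 \<le> E"
      using L2sq_nonneg[of "ux t"] L2sq_nonneg[of "ut t"] by (intro order_trans[OF _ kinetic]) simp
  qed
  finally show "f t * energy V u ux ut t + (LINT x|lborel. h t x * ux t x * ut t x)
      \<ge> 1/2 * f t * energy V u ux ut t"
    unfolding E_def by linarith
qed simp

end
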